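(* Let $n\ge 3$, $m\ge 1$, and let $f=x_0^{a_0}x_1^{a_1}\cdots x_n^{a_n}x_{n+1}^{a_{n+1}}$ be a monomial. If $f\in I_{B_n}^{(m)}$, then $g=x_0^{t}x_1^{a_1}\cdots x_n^{a_n}x_{n+1}^{t}\in I_{B_n}^{(m)}$, where $t=\min\{a_0,a_{n+1}\}$.
   Context: Let $k$ be a field. $Q_n$ is the cycle graph on vertices $1,\dots,n$ (edges $\{i,i+1\}$ for $1\le i\le n-1$ and $\{n,1\}$). $B_n$ is the simplicial complex on $\{0,\dots,n+1\}$ with facets $\{0,i,j\}$ and $\{n+1,i,j\}$ for each edge $\{i,j\}$ of $Q_n$ (boundary of the bipyramid over $Q_n$), and $I_{B_n}\subset k[x_0,\dots,x_{n+1}]$ is its Stanley-Reisner ideal, generated by $\prod_{i\in\tau}x_i$ over non-faces $\tau$ of $B_n$. For a homogeneous ideal $I$ of $R$, $I^{(m)}=R\cap\bigcap_{P\in\mathrm{Ass}(I)}I^mR_P$. *)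

theory Defs
  imports Main "HOL-Library.Poly_Mapping"
begin

text \<open>Polynomials in variables x_0, x_1, ... over 'k: monomials are exponent vectors
  (nat to nat, finitely supported), polynomials are finitely supported coefficient functions on them.\<close>

type_synonym 'k mpoly = "(nat \<Rightarrow>\<^sub>0 nat) \<Rightarrow>\<^sub>0 'k"

definition Var :: "nat \<Rightarrow> 'k::comm_ring_1 mpoly" where
  "Var i = Poly_Mapping.single (Poly_Mapping.single i 1) 1"

definition polyring :: "nat \<Rightarrow> 'k::comm_ring_1 mpoly set" where
  "polyring N = {p :: 'k mpoly. \<forall>mon \<in> Poly_Mapping.keys p. \<forall>i \<in> Poly_Mapping.keys mon. i \<le> N}"

definition gen_ideal :: "nat \<Rightarrow> 'k::comm_ring_1 mpoly set \<Rightarrow> 'k mpoly set" where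
  "gen_ideal N G = {p. \<exists>S c. finite S \<and> S \<subseteq> G \<and> (\<forall>g\<in>S. c g \<in> polyring N)
                         \<and> p = (\<Sum>g\<in>S. c g * g)}"

definition is_ideal :: "nat \<Rightarrow> 'k::comm_ring_1 mpoly set \<Rightarrow> bool" where
  "is_ideal N I \<longleftrightarrow> I \<subseteq> polyring N \<and> 0 \<in> I \<and> (\<forall>a\<in>I. \<forall>b\<in>I. a + b \<in> I)
                   \<and> (\<forall>r\<in>polyring N. \<forall>a\<in>I. r * a \<in> I)"

definition is_prime_ideal :: "nat \<Rightarrow> 'k::comm_ring_1 mpoly set \<Rightarrow> bool" where
  "is_prime_ideal N P \<longleftrightarrow> is_ideal N P \<and> P \<noteq> polyring N \<and>
     (\<forall>a\<in>polyring N. \<forall>b\<in>polyring N. a * b \<in> P \<longrightarrow> a \<in> P \<or> b \<in> P)"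

definition ideal_power :: "nat \<Rightarrow> 'k::comm_ring_1 mpoly set \<Rightarrow> nat \<Rightarrow> 'k mpoly set" where
  "ideal_power N I m = gen_ideal N {prod_list l | l. length l = m \<and> set l \<subseteq> I}"

definition Ass :: "nat \<Rightarrow> 'k::comm_ring_1 mpoly set \<Rightarrow> 'k mpoly set set" where
  "Ass N I = {P. is_prime_ideal N P \<and> (\<exists>r\<in>polyring N. P = {a \<in> polyring N. a * r \<in> I})}"

text \<open>Symbolic power I^(m) = R \<inter> \<Inter>_{P\<in>Ass I} I^m R_P. Since R is a domain, f \<in> R lies in
  I^m R_P iff s*f \<in> I^m for some s \<in> R - P.\<close>
definition symbolic_power :: "nat \<Rightarrow> 'k::comm_ring_1 mpoly set \<Rightarrow> nat \<Rightarrow> 'k mpoly set" where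
  "symbolic_power N I m = {f \<in> polyring N. \<forall>P \<in> Ass N I.
       \<exists>s \<in> polyring N - P. s * f \<in> ideal_power N I m}"

definition Q_edges :: "nat \<Rightarrow> nat set set" where
  "Q_edges n = {{i, i + 1} | i. 1 \<le> i \<and> i \<le> n - 1} \<union> {{n, 1}}"

text \<open>Facets of B_n (boundary of bipyramid), on vertex set {0..n+1}.\<close>
definition B_facets :: "nat \<Rightarrow> nat set set" where
  "B_facets n = {insert 0 e | e. e \<in> Q_edges n} \<union> {insert (n + 1) e | e. e \<in> Q_edges n}"

definition B_face :: "nat \<Rightarrow> nat set \<Rightarrow> bool" where
  "B_face n \<sigma> \<longleftrightarrow> (\<exists>F \<in> B_facets n. \<sigma> \<subseteq> F)"

definition I_B :: "nat \<Rightarrow> 'k::comm_ring_1 mpoly set" where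
  "I_B n = gen_ideal (n + 1) {(\<Prod>i\<in>\<tau>. Var i) | \<tau>. \<tau> \<subseteq> {0..n + 1} \<and> \<not> B_face n \<tau>}"

definition monom :: "nat \<Rightarrow> (nat \<Rightarrow> nat) \<Rightarrow> 'k::comm_ring_1 mpoly" where
  "monom N a = (\<Prod>i\<in>{0..N}. Var i ^ a i)"

end

theory Submission
  imports Defs
begin

text \<open>Membership in a symbolic power is tested prime by prime: g lies in I^(m) iff for every
  associated prime P of I some s outside P has s g in I^m. Multiplying s by a power of a
  variable outside P shows that the exponent of such a variable may be lowered freely.

  For a Stanley-Reisner ideal and P = (I : r), split off the part of r lying in I; a term of the
  nonzero remainder is supported on a face \<sigma>, and for every variable x_i in P the set
  \<sigma> \<union> {i} contains a nonface. Every facet of B_n contains 0 or n+1, so x_0 or x_(n+1),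
  say x_j, lies outside P. If the other end already has exponent t = min(a_0, a_(n+1)), lower
  the exponent of x_j in f to t; otherwise do so in the image of f under the swap of x_0 and
  x_(n+1), an automorphism of B_n that therefore preserves I^(m).\<close>

section \<open>Ideals of the polynomial ring\<close>

lemma polyring_iff:
  "p \<in> polyring N \<longleftrightarrow> (\<forall>mon\<in>Poly_Mapping.keys p. Poly_Mapping.keys mon \<subseteq> {..N})"
  unfolding polyring_def by auto

lemma keys_plus_nat:
  "Poly_Mapping.keys ((a :: 'a \<Rightarrow>\<^sub>0 nat) + b) = Poly_Mapping.keys a \<union> Poly_Mapping.keys b"
  by (auto simp: in_keys_iff lookup_add)

lemma polyring_zero: "0 \<in> polyring N"
  by (simp add: polyring_iff)

lemma polyring_one: "(1 :: 'k::comm_ring_1 mpoly) \<in> polyring N"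
  by (simp add: polyring_iff)

lemma polyring_add: "a \<in> polyring N \<Longrightarrow> b \<in> polyring N \<Longrightarrow> a + b \<in> polyring N"
  unfolding polyring_iff using keys_add[of a b] by blast

lemma polyring_mult:
  assumes "a \<in> polyring N" "b \<in> polyring N"
  shows "(a :: 'k::comm_ring_1 mpoly) * b \<in> polyring N"
  unfolding polyring_iff
proof
  fix mon assume "mon \<in> Poly_Mapping.keys (a * b)"
  then obtain x y where "mon = x + y" "x \<in> Poly_Mapping.keys a" "y \<in> Poly_Mapping.keys b"
    using keys_mult[of a b] by blast
  then show "Poly_Mapping.keys mon \<subseteq> {..N}"
    using assms by (auto simp: polyring_iff keys_plus_nat)
qed

lemma polyring_Var: "i \<le> N \<Longrightarrow> (Var i :: 'k::comm_ring_1 mpoly) \<in> polyring N"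
  by (simp add: polyring_iff Var_def)

lemma polyring_power: "a \<in> polyring N \<Longrightarrow> (a :: 'k::comm_ring_1 mpoly) ^ d \<in> polyring N"
  by (induction d) (auto intro: polyring_mult polyring_one)

lemma polyring_prod:
  "(\<And>i. i \<in> A \<Longrightarrow> f i \<in> polyring N) \<Longrightarrow> (prod f A :: 'k::comm_ring_1 mpoly) \<in> polyring N"
  by (induction A rule: infinite_finite_induct) (auto intro: polyring_mult polyring_one)

lemma polyring_monom: "(monom N a :: 'k::comm_ring_1 mpoly) \<in> polyring N"
  unfolding monom_def by (auto intro!: polyring_prod polyring_power polyring_Var)

lemma gen_ideal_zero: "0 \<in> gen_ideal N G"
  unfolding gen_ideal_def by (intro CollectI exI[of _ "{}"] exI[of _ "\<lambda>_. 0"]) simp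

lemma gen_ideal_generator: "g \<in> G \<Longrightarrow> c \<in> polyring N \<Longrightarrow> c * g \<in> gen_ideal N G"
  unfolding gen_ideal_def by (intro CollectI exI[of _ "{g}"] exI[of _ "\<lambda>_. c"]) simp

lemma gen_ideal_add:
  assumes "a \<in> gen_ideal N G" "b \<in> gen_ideal N G"
  shows "a + b \<in> gen_ideal N G"
proof -
  obtain S1 c1 where a_sum: "finite S1" "S1 \<subseteq> G" "\<forall>g\<in>S1. c1 g \<in> polyring N" "a = (\<Sum>g\<in>S1. c1 g * g)"
    using assms(1) unfolding gen_ideal_def by blast
  obtain S2 c2 where b_sum: "finite S2" "S2 \<subseteq> G" "\<forall>g\<in>S2. c2 g \<in> polyring N" "b = (\<Sum>g\<in>S2. c2 g * g)"
    using assms(2) unfolding gen_ideal_def by blast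
  define c where "c g = (if g \<in> S1 then c1 g else 0) + (if g \<in> S2 then c2 g else 0)" for g
  have "(\<Sum>g\<in>S1 \<union> S2. c g * g)
      = (\<Sum>g\<in>S1 \<union> S2. if g \<in> S1 then c1 g * g else 0) + (\<Sum>g\<in>S1 \<union> S2. if g \<in> S2 then c2 g * g else 0)"
    unfolding c_def sum.distrib[symmetric] by (rule sum.cong) (auto simp: distrib_right)
  also have "\<dots> = a + b"
    using a_sum b_sum by (simp add: sum.If_cases Int_absorb1 Int_absorb2 inf_commute[of "S1 \<union> S2"] Int_Un_distrib2)
  finally have "a + b = (\<Sum>g\<in>S1 \<union> S2. c g * g)" ..
  moreover have "\<forall>g\<in>S1 \<union> S2. c g \<in> polyring N"
    using a_sum b_sum by (auto simp: c_def intro!: polyring_add polyring_zero)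
  ultimately show ?thesis
    using a_sum b_sum unfolding gen_ideal_def by (intro CollectI exI[of _ "S1 \<union> S2"] exI[of _ c]) auto
qed

lemma gen_ideal_mult:
  assumes "r \<in> polyring N" "a \<in> gen_ideal N G"
  shows "r * a \<in> gen_ideal N G"
proof -
  obtain S c where S: "finite S" "S \<subseteq> G" "\<forall>g\<in>S. c g \<in> polyring N" "a = (\<Sum>g\<in>S. c g * g)"
    using assms(2) unfolding gen_ideal_def by blast
  then have "r * a = (\<Sum>g\<in>S. (r * c g) * g)" "\<forall>g\<in>S. r * c g \<in> polyring N"
    using assms(1) by (auto simp: sum_distrib_left mult.assoc intro: polyring_mult)
  then show ?thesis
    using S unfolding gen_ideal_def by (intro CollectI exI[of _ S] exI[of _ "\<lambda>g. r * c g"]) auto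
qed

lemma gen_ideal_sum: "(\<And>i. i \<in> A \<Longrightarrow> f i \<in> gen_ideal N G) \<Longrightarrow> sum f A \<in> gen_ideal N G"
  by (induction A rule: infinite_finite_induct) (auto intro: gen_ideal_add gen_ideal_zero)

lemma gen_ideal_diff:
  assumes "a \<in> gen_ideal N G" "b \<in> gen_ideal N G"
  shows "(a :: 'k::comm_ring_1 mpoly) - b \<in> gen_ideal N G"
proof -
  have "- 1 \<in> polyring N"
    by (simp add: polyring_iff)
  then have "(- 1) * b \<in> gen_ideal N G"
    using assms(2) by (rule gen_ideal_mult)
  then show ?thesis
    using gen_ideal_add[OF assms(1), of "- b"] by simp
qed

lemma one_notin_prime_ideal: "is_prime_ideal N P \<Longrightarrow> (1 :: 'k::comm_ring_1 mpoly) \<notin> P"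
  unfolding is_prime_ideal_def is_ideal_def by (metis mult.right_neutral subsetI subset_antisym)

lemma power_notin_prime_ideal:
  assumes "is_prime_ideal N P" "x \<in> polyring N" "x \<notin> P"
  shows "(x :: 'k::comm_ring_1 mpoly) ^ d \<notin> P"
proof (induction d)
  case 0
  then show ?case using one_notin_prime_ideal[OF assms(1)] by simp
next
  case (Suc d)
  then show ?case
    using assms unfolding is_prime_ideal_def by (metis polyring_power power_Suc)
qed

lemma monom_fun_upd_mult:
  assumes "j \<le> N" "e \<le> a j"
  shows "(monom N a :: 'k::comm_ring_1 mpoly) = monom N (a(j := e)) * Var j ^ (a j - e)"
proof -
  have j: "j \<in> {0..N}"
    using assms(1) by simp
  have "monom N a = Var j ^ a j * (\<Prod>i\<in>{0..N} - {j}. Var i ^ a i)"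
    unfolding monom_def by (rule prod.remove[OF _ j]) simp
  also have "Var j ^ a j = Var j ^ e * (Var j ^ (a j - e) :: 'k mpoly)"
    using assms(2) by (simp flip: power_add)
  also have "(\<Prod>i\<in>{0..N} - {j}. Var i ^ a i) = (\<Prod>i\<in>{0..N} - {j}. (Var i ^ (a(j := e)) i :: 'k mpoly))"
    by (rule prod.cong) auto
  also have "Var j ^ e * Var j ^ (a j - e) * \<dots> = monom N (a(j := e)) * Var j ^ (a j - e)"
    unfolding monom_def by (simp add: prod.remove[OF _ j] ac_simps)
  finally show ?thesis .
qed

lemma symbolic_power_lower_exponent:
  assumes f: "monom N a \<in> symbolic_power N I m" and P: "P \<in> Ass N I"
    and j: "j \<le> N" "Var j \<notin> P" and "e \<le> a j"
  shows "\<exists>s \<in> polyring N - P. s * (monom N (a(j := e)) :: 'k::comm_ring_1 mpoly) \<in> ideal_power N I m"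
proof -
  obtain s where s: "s \<in> polyring N - P" "s * monom N a \<in> ideal_power N I m"
    using f P unfolding symbolic_power_def by blast
  have prime: "is_prime_ideal N P"
    using P unfolding Ass_def by blast
  let ?u = "Var j ^ (a j - e) :: 'k mpoly"
  have "?u \<in> polyring N" "?u \<notin> P"
    using polyring_power polyring_Var power_notin_prime_ideal[OF prime] j by blast+
  with s(1) have "s * ?u \<in> polyring N - P"
    using prime unfolding is_prime_ideal_def by (auto intro: polyring_mult)
  moreover have "s * ?u * monom N (a(j := e)) = s * monom N a"
    unfolding monom_fun_upd_mult[where a = a, OF j(1) \<open>e \<le> a j\<close>] by (simp add: ac_simps)
  ultimately show ?thesis
    using s(2) by (intro bexI[of _ "s * ?u"]) simp_all
qed

section \<open>Stanley-Reisner ideals\<close>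

definition sqfree_exp :: "nat set \<Rightarrow> (nat \<Rightarrow>\<^sub>0 nat)" where
  "sqfree_exp \<tau> = (\<Sum>i\<in>\<tau>. Poly_Mapping.single i 1)"

lemma lookup_sqfree_exp:
  "finite \<tau> \<Longrightarrow> Poly_Mapping.lookup (sqfree_exp \<tau>) j = (if j \<in> \<tau> then 1 else 0)"
  unfolding sqfree_exp_def by (simp add: lookup_sum lookup_single when_def)

lemma keys_sqfree_exp: "finite \<tau> \<Longrightarrow> Poly_Mapping.keys (sqfree_exp \<tau>) = \<tau>"
  by (auto simp: in_keys_iff lookup_sqfree_exp split: if_splits)

lemma prod_Var_eq_single:
  "finite \<tau> \<Longrightarrow> (\<Prod>i\<in>\<tau>. Var i) = (Poly_Mapping.single (sqfree_exp \<tau>) 1 :: 'k::comm_ring_1 mpoly)"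
  by (induction \<tau> rule: finite_induct) (simp_all add: sqfree_exp_def Var_def mult_single)

lemma poly_mapping_sum_single:
  "p = (\<Sum>a\<in>Poly_Mapping.keys p. Poly_Mapping.single a (Poly_Mapping.lookup p a))"
  by (rule poly_mapping_eqI) (simp add: lookup_sum lookup_single when_def in_keys_iff)

lemma lookup_single_one_mult:
  "Poly_Mapping.lookup (Poly_Mapping.single m 1 * (p :: 'k::comm_ring_1 mpoly)) (m + k)
     = Poly_Mapping.lookup p k"
proof -
  have "Poly_Mapping.single m 1 * p
      = (\<Sum>a\<in>Poly_Mapping.keys p. Poly_Mapping.single (m + a) (Poly_Mapping.lookup p a))"
    by (subst poly_mapping_sum_single[of p]) (simp add: sum_distrib_left mult_single)
  then show ?thesis
    by (simp add: lookup_sum lookup_single when_def in_keys_iff)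
qed

definition SR_ideal :: "nat \<Rightarrow> (nat set \<Rightarrow> bool) \<Rightarrow> 'k::comm_ring_1 mpoly set" where
  "SR_ideal N face = gen_ideal N {(\<Prod>i\<in>\<tau>. Var i) | \<tau>. \<tau> \<subseteq> {0..N} \<and> \<not> face \<tau>}"

lemma keys_SR_ideal:
  assumes "p \<in> SR_ideal N face" "k \<in> Poly_Mapping.keys p"
  shows "\<exists>\<tau> \<subseteq> Poly_Mapping.keys k. \<tau> \<subseteq> {0..N} \<and> \<not> face \<tau>"
proof -
  obtain S c where S: "S \<subseteq> {(\<Prod>i\<in>\<tau>. Var i) | \<tau>. \<tau> \<subseteq> {0..N} \<and> \<not> face \<tau>}" "p = (\<Sum>g\<in>S. c g * g)"
    using assms(1) unfolding SR_ideal_def gen_ideal_def by blast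
  obtain g where g: "g \<in> S" "k \<in> Poly_Mapping.keys (c g * g)"
    using keys_sum[of "\<lambda>g. c g * g" S] assms(2) S(2) by blast
  obtain \<tau> where \<tau>: "\<tau> \<subseteq> {0..N}" "\<not> face \<tau>" "g = (\<Prod>i\<in>\<tau>. Var i)"
    using S(1) g(1) by blast
  then have fin: "finite \<tau>"
    using finite_subset by blast
  obtain x where "k = x + sqfree_exp \<tau>"
    using keys_mult[of "c g" g] g(2) \<tau>(3) by (auto simp: prod_Var_eq_single[OF fin])
  then have "\<tau> \<subseteq> Poly_Mapping.keys k"
    by (simp add: keys_plus_nat keys_sqfree_exp[OF fin])
  with \<tau> show ?thesis by blast
qed

lemma single_in_SR_ideal:
  assumes "\<tau> \<subseteq> Poly_Mapping.keys k" "\<tau> \<subseteq> {0..N}" "\<not> face \<tau>" "Poly_Mapping.keys k \<subseteq> {..N}"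
  shows "(Poly_Mapping.single k c :: 'k::comm_ring_1 mpoly) \<in> SR_ideal N face"
proof -
  have fin: "finite \<tau>"
    using assms(2) finite_subset by blast
  have "Poly_Mapping.lookup (sqfree_exp \<tau>) i \<le> Poly_Mapping.lookup k i" for i
    using assms(1) by (auto simp: lookup_sqfree_exp[OF fin] in_keys_iff)
  then have k: "k = (k - sqfree_exp \<tau>) + sqfree_exp \<tau>"
    by (intro poly_mapping_eqI) (simp add: lookup_add lookup_minus)
  have "Poly_Mapping.keys (k - sqfree_exp \<tau>) \<subseteq> Poly_Mapping.keys k"
    by (auto simp: in_keys_iff lookup_minus)
  then have "Poly_Mapping.keys (k - sqfree_exp \<tau>) \<subseteq> {..N}"
    using assms(4) by blast
  then have "Poly_Mapping.single (k - sqfree_exp \<tau>) c \<in> polyring N"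
    by (simp add: polyring_iff)
  moreover have "Poly_Mapping.single k c = Poly_Mapping.single (k - sqfree_exp \<tau>) c * (\<Prod>i\<in>\<tau>. Var i)"
    by (subst k) (simp add: prod_Var_eq_single[OF fin] mult_single)
  ultimately show ?thesis
    unfolding SR_ideal_def using assms(2,3) by (auto intro: gen_ideal_generator)
qed

lemma SR_ideal_decompose:
  assumes "r \<in> polyring N"
  obtains r1 r2 where "r = r1 + r2" "r1 \<in> SR_ideal N face"
    "\<And>k. k \<in> Poly_Mapping.keys r2 \<Longrightarrow> face (Poly_Mapping.keys k)"
proof -
  define divisible where "divisible k \<longleftrightarrow> (\<exists>\<tau> \<subseteq> Poly_Mapping.keys k. \<tau> \<subseteq> {0..N} \<and> \<not> face \<tau>)"
    for k :: "nat \<Rightarrow>\<^sub>0 nat"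
  define r1 where "r1 = (\<Sum>k\<in>{k \<in> Poly_Mapping.keys r. divisible k}. Poly_Mapping.single k (Poly_Mapping.lookup r k))"
  have "r1 \<in> SR_ideal N face"
    unfolding r1_def SR_ideal_def
  proof (rule gen_ideal_sum, unfold SR_ideal_def[symmetric])
    fix k assume "k \<in> {k \<in> Poly_Mapping.keys r. divisible k}"
    then obtain \<tau> where "\<tau> \<subseteq> Poly_Mapping.keys k" "\<tau> \<subseteq> {0..N}" "\<not> face \<tau>"
      and "Poly_Mapping.keys k \<subseteq> {..N}"
      using assms unfolding divisible_def polyring_iff by blast
    then show "Poly_Mapping.single k (Poly_Mapping.lookup r k) \<in> SR_ideal N face"
      by (rule single_in_SR_ideal)
  qed
  moreover have "face (Poly_Mapping.keys k)" if "k \<in> Poly_Mapping.keys (r - r1)" for k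
  proof -
    have "Poly_Mapping.lookup r1 k
        = (if k \<in> Poly_Mapping.keys r \<and> divisible k then Poly_Mapping.lookup r k else 0)"
      unfolding r1_def by (simp add: lookup_sum lookup_single when_def)
    then have "k \<in> Poly_Mapping.keys r" "\<not> divisible k"
      using that by (auto simp: in_keys_iff lookup_minus split: if_splits)
    moreover from this(1) have "Poly_Mapping.keys k \<subseteq> {0..N}"
      using assms unfolding polyring_iff atLeast0AtMost by blast
    ultimately show ?thesis
      unfolding divisible_def by blast
  qed
  ultimately show thesis
    using that[of r1 "r - r1"] by simp
qed

lemma Ass_SR_ideal_face:
  assumes "P \<in> Ass N (SR_ideal N face :: 'k::comm_ring_1 mpoly set)"
  obtains \<sigma> where "face \<sigma>"
    "\<And>i. i \<le> N \<Longrightarrow> Var i \<in> P \<Longrightarrow> \<exists>\<tau> \<subseteq> insert i \<sigma>. \<tau> \<subseteq> {0..N} \<and> \<not> face \<tau>"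
proof -
  obtain r where prime: "is_prime_ideal N P" and r: "r \<in> polyring N"
    and P: "P = {a \<in> polyring N. a * r \<in> SR_ideal N face}"
    using assms unfolding Ass_def by blast
  obtain r1 r2 where r: "r = r1 + r2" and r1: "r1 \<in> SR_ideal N face"
    and faces: "\<And>k. k \<in> Poly_Mapping.keys r2 \<Longrightarrow> face (Poly_Mapping.keys k)"
    using SR_ideal_decompose[OF r] by blast
  have "1 \<notin> P"
    by (rule one_notin_prime_ideal[OF prime])
  then have "r \<notin> SR_ideal N face"
    unfolding P by (simp add: polyring_one)
  then have "r2 \<noteq> 0"
    using r r1 by auto
  then obtain k where k: "k \<in> Poly_Mapping.keys r2"
    by (metis ex_in_conv keys_eq_empty)
  have "\<exists>\<tau> \<subseteq> insert i (Poly_Mapping.keys k). \<tau> \<subseteq> {0..N} \<and> \<not> face \<tau>"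
    if i: "i \<le> N" "Var i \<in> P" for i
  proof -
    have "Var i * r \<in> SR_ideal N face"
      using i(2) P by blast
    moreover have "Var i * r1 \<in> SR_ideal N face"
      using gen_ideal_mult[OF polyring_Var[OF i(1)] r1[unfolded SR_ideal_def]]
      unfolding SR_ideal_def .
    moreover have "Var i * r2 = Var i * r - Var i * r1"
      by (simp add: r algebra_simps)
    ultimately have "Var i * r2 \<in> SR_ideal N face"
      unfolding SR_ideal_def by (simp add: gen_ideal_diff)
    moreover have "Poly_Mapping.single i 1 + k \<in> Poly_Mapping.keys (Var i * r2)"
      using k by (simp add: in_keys_iff Var_def lookup_single_one_mult)
    ultimately have "\<exists>\<tau> \<subseteq> Poly_Mapping.keys (Poly_Mapping.single i 1 + k). \<tau> \<subseteq> {0..N} \<and> \<not> face \<tau>"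
      by (rule keys_SR_ideal)
    then show ?thesis
      by (simp add: keys_plus_nat)
  qed
  with faces[OF k] show thesis
    by (rule that)
qed

section \<open>Renaming variables by an involution\<close>

text \<open>\<open>Poly_Mapping.map_key\<close> is only meaningful for injective key maps. For an involution \<pi>,
  \<open>rename_vars \<pi>\<close> is the ring automorphism substituting x_(\<pi> i) for x_i.\<close>

definition rename_vars :: "(nat \<Rightarrow> nat) \<Rightarrow> 'k::comm_ring_1 mpoly \<Rightarrow> 'k mpoly" where
  "rename_vars \<pi> p = Poly_Mapping.map_key (Poly_Mapping.map_key \<pi>) p"

locale var_involution =
  fixes N :: nat and \<pi> :: "nat \<Rightarrow> nat"
  assumes involutive [simp]: "\<pi> (\<pi> i) = i"
    and bounded: "i \<le> N \<Longrightarrow> \<pi> i \<le> N"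
begin

lemma inj_var: "inj \<pi>"
  by (metis injI involutive)

lemma map_key_involutive [simp]: "Poly_Mapping.map_key \<pi> (Poly_Mapping.map_key \<pi> k) = k"
proof -
  have id: "\<pi> \<circ> \<pi> = (\<lambda>i. i)"
    by auto
  show ?thesis
    unfolding map_key_compose[OF inj_var inj_var] id map_key_id ..
qed

lemma inj_map_key: "inj (Poly_Mapping.map_key \<pi>)"
  by (metis injI map_key_involutive)

lemma rename_vars_involutive [simp]: "rename_vars \<pi> (rename_vars \<pi> p) = p"
proof -
  have id: "Poly_Mapping.map_key \<pi> \<circ> Poly_Mapping.map_key \<pi> = (\<lambda>k. k)"
    by auto
  show ?thesis
    unfolding rename_vars_def map_key_compose[OF inj_map_key inj_map_key] id map_key_id ..
qed

lemma rename_vars_zero: "rename_vars \<pi> 0 = 0"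
  unfolding rename_vars_def by (rule map_key_zero[OF inj_map_key])

lemma rename_vars_add: "rename_vars \<pi> (p + q) = rename_vars \<pi> p + rename_vars \<pi> q"
  unfolding rename_vars_def by (rule map_key_plus[OF inj_map_key])

lemma rename_vars_single:
  "rename_vars \<pi> (Poly_Mapping.single k c) = Poly_Mapping.single (Poly_Mapping.map_key \<pi> k) c"
  unfolding rename_vars_def by (metis map_key_single[OF inj_map_key] map_key_involutive)

lemma rename_vars_sum: "rename_vars \<pi> (sum f A) = (\<Sum>x\<in>A. rename_vars \<pi> (f x))"
  by (induction A rule: infinite_finite_induct) (simp_all add: rename_vars_zero rename_vars_add)

lemma rename_vars_mult: "rename_vars \<pi> (p * q) = rename_vars \<pi> p * rename_vars \<pi> q"
proof -
  let ?term = "\<lambda>p a. Poly_Mapping.single a (Poly_Mapping.lookup p a)"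
  have "rename_vars \<pi> (?term p a * ?term q b) = rename_vars \<pi> (?term p a) * rename_vars \<pi> (?term q b)"
    for a b
    by (simp add: mult_single rename_vars_single map_key_plus[OF inj_var])
  then have "rename_vars \<pi> (p * q)
      = (\<Sum>a\<in>Poly_Mapping.keys p. \<Sum>b\<in>Poly_Mapping.keys q. rename_vars \<pi> (?term p a) * rename_vars \<pi> (?term q b))"
    by (subst poly_mapping_sum_single[of p], subst poly_mapping_sum_single[of q])
      (simp add: sum_product rename_vars_sum)
  also have "\<dots> = rename_vars \<pi> p * rename_vars \<pi> q"
    by (subst (3) poly_mapping_sum_single[of p], subst (3) poly_mapping_sum_single[of q])
      (simp add: sum_product rename_vars_sum)
  finally show ?thesis .
qed

lemma rename_vars_one: "rename_vars \<pi> 1 = 1"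
  using rename_vars_single[of 0 1] by (simp add: map_key_zero[OF inj_var])

lemma rename_vars_prod: "rename_vars \<pi> (prod f A) = (\<Prod>x\<in>A. rename_vars \<pi> (f x))"
  by (induction A rule: infinite_finite_induct) (simp_all add: rename_vars_mult rename_vars_one)

lemma rename_vars_prod_list: "rename_vars \<pi> (prod_list ps) = prod_list (map (rename_vars \<pi>) ps)"
  by (induction ps) (simp_all add: rename_vars_mult rename_vars_one)

lemma rename_vars_power: "rename_vars \<pi> (p ^ d) = rename_vars \<pi> p ^ d"
  by (induction d) (simp_all add: rename_vars_mult rename_vars_one)

lemma rename_vars_Var: "rename_vars \<pi> (Var i) = Var (\<pi> i)"
proof -
  have "Poly_Mapping.map_key \<pi> (Poly_Mapping.single i 1) = Poly_Mapping.single (\<pi> i) (1 :: nat)"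
    using map_key_single[OF inj_var, of "\<pi> i" "1 :: nat"] by simp
  then show ?thesis
    unfolding Var_def rename_vars_single by (simp only:)
qed

lemma rename_vars_polyring:
  assumes "p \<in> polyring N"
  shows "rename_vars \<pi> p \<in> polyring N"
  unfolding polyring_iff
proof (intro ballI subsetI)
  fix k i assume "k \<in> Poly_Mapping.keys (rename_vars \<pi> p)" "i \<in> Poly_Mapping.keys k"
  then have "Poly_Mapping.map_key \<pi> k \<in> Poly_Mapping.keys p" "\<pi> i \<in> Poly_Mapping.keys (Poly_Mapping.map_key \<pi> k)"
    unfolding rename_vars_def by (simp_all add: keys_map_key[OF inj_map_key] keys_map_key[OF inj_var])
  then have "\<pi> i \<le> N"
    using assms unfolding polyring_iff by blast
  then show "i \<in> {..N}"
    using bounded[of "\<pi> i"] by simp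
qed

lemma image_var_atLeastAtMost: "\<pi> ` {0..N} = {0..N}"
proof
  show "\<pi> ` {0..N} \<subseteq> {0..N}"
    using bounded by (simp add: image_subset_iff)
  show "{0..N} \<subseteq> \<pi> ` {0..N}"
  proof
    fix i assume "i \<in> {0..N}"
    then have "\<pi> i \<in> {0..N}"
      using bounded by simp
    then show "i \<in> \<pi> ` {0..N}"
      by (rule image_eqI[of i \<pi> "\<pi> i", OF involutive[symmetric]])
  qed
qed

lemma rename_vars_monom: "rename_vars \<pi> (monom N a) = monom N (a \<circ> \<pi>)"
proof -
  have "rename_vars \<pi> (monom N a) = (\<Prod>i\<in>{0..N}. Var (\<pi> i) ^ a i)"
    unfolding monom_def by (simp add: rename_vars_prod rename_vars_power rename_vars_Var)
  also have "\<dots> = (\<Prod>j\<in>\<pi> ` {0..N}. Var j ^ a (\<pi> j))"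
    by (simp add: prod.reindex inj_on_subset[OF inj_var])
  finally show ?thesis
    unfolding monom_def image_var_atLeastAtMost by simp
qed

lemma rename_vars_gen_ideal:
  assumes "rename_vars \<pi> ` G \<subseteq> G" "p \<in> gen_ideal N G"
  shows "rename_vars \<pi> p \<in> gen_ideal N G"
proof -
  obtain S c where S: "S \<subseteq> G" "\<forall>g\<in>S. c g \<in> polyring N" "p = (\<Sum>g\<in>S. c g * g)"
    using assms(2) unfolding gen_ideal_def by blast
  then have "rename_vars \<pi> p = (\<Sum>g\<in>S. rename_vars \<pi> (c g) * rename_vars \<pi> g)"
    by (simp add: rename_vars_sum rename_vars_mult)
  also have "\<dots> \<in> gen_ideal N G"
    using S assms(1) by (auto intro!: gen_ideal_sum gen_ideal_generator rename_vars_polyring)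
  finally show ?thesis .
qed

lemma rename_vars_ideal_power:
  assumes "rename_vars \<pi> ` I \<subseteq> I" "p \<in> ideal_power N I m"
  shows "rename_vars \<pi> p \<in> ideal_power N I m"
  using assms(2) unfolding ideal_power_def
proof (rule rename_vars_gen_ideal[rotated], intro image_subsetI)
  fix g assume "g \<in> {prod_list l | l. length l = m \<and> set l \<subseteq> I}"
  then obtain l where "g = prod_list l" "length l = m" "set l \<subseteq> I"
    by blast
  then show "rename_vars \<pi> g \<in> {prod_list l | l. length l = m \<and> set l \<subseteq> I}"
    using assms(1) by (intro CollectI exI[of _ "map (rename_vars \<pi>) l"]) (auto simp: rename_vars_prod_list)
qed

lemma rename_vars_SR_ideal:
  assumes "\<And>\<sigma>. face \<sigma> \<Longrightarrow> face (\<pi> ` \<sigma>)" "p \<in> SR_ideal N face"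
  shows "rename_vars \<pi> p \<in> SR_ideal N face"
  using assms(2) unfolding SR_ideal_def
proof (rule rename_vars_gen_ideal[rotated], intro image_subsetI)
  fix g assume "g \<in> {(\<Prod>i\<in>\<tau>. Var i) | \<tau>. \<tau> \<subseteq> {0..N} \<and> \<not> face \<tau>}"
  then obtain \<tau> where \<tau>: "\<tau> \<subseteq> {0..N}" "\<not> face \<tau>" "g = (\<Prod>i\<in>\<tau>. Var i)"
    by blast
  have "rename_vars \<pi> g = (\<Prod>i\<in>\<pi> ` \<tau>. Var i)"
    using \<tau>(3) by (simp add: rename_vars_prod rename_vars_Var prod.reindex inj_on_subset[OF inj_var])
  moreover have "\<pi> ` \<tau> \<subseteq> {0..N}"
    using \<tau>(1) image_var_atLeastAtMost by blast
  moreover have "\<not> face (\<pi> ` \<tau>)"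
    using assms(1)[of "\<pi> ` \<tau>"] \<tau>(2) by (auto simp: image_image)
  ultimately show "rename_vars \<pi> g \<in> {(\<Prod>i\<in>\<tau>. Var i) | \<tau>. \<tau> \<subseteq> {0..N} \<and> \<not> face \<tau>}"
    by (intro CollectI exI[of _ "\<pi> ` \<tau>"]) simp
qed

lemma is_prime_ideal_rename_vars_preimage:
  assumes "is_prime_ideal N P"
  shows "is_prime_ideal N {x \<in> polyring N. rename_vars \<pi> x \<in> P}"
proof -
  have ideal: "is_ideal N P" and proper: "P \<noteq> polyring N"
    and prime: "\<And>a b. a \<in> polyring N \<Longrightarrow> b \<in> polyring N \<Longrightarrow> a * b \<in> P \<Longrightarrow> a \<in> P \<or> b \<in> P"
    using assms unfolding is_prime_ideal_def by blast+
  have "is_ideal N {x \<in> polyring N. rename_vars \<pi> x \<in> P}"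
    using ideal unfolding is_ideal_def
    by (auto simp: rename_vars_zero rename_vars_add rename_vars_mult
        intro: polyring_zero polyring_add polyring_mult rename_vars_polyring)
  moreover have "{x \<in> polyring N. rename_vars \<pi> x \<in> P} \<noteq> polyring N"
  proof
    assume all: "{x \<in> polyring N. rename_vars \<pi> x \<in> P} = polyring N"
    obtain x where "x \<in> polyring N" "x \<notin> P"
      using proper ideal unfolding is_ideal_def by blast
    then show False
      using all rename_vars_polyring[of x] by (metis (mono_tags, lifting) mem_Collect_eq rename_vars_involutive)
  qed
  moreover have "a \<in> polyring N \<and> rename_vars \<pi> a \<in> P \<or> b \<in> polyring N \<and> rename_vars \<pi> b \<in> P"
    if "a \<in> polyring N" "b \<in> polyring N" "rename_vars \<pi> (a * b) \<in> P" for a b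
    using that prime[of "rename_vars \<pi> a" "rename_vars \<pi> b"] by (simp add: rename_vars_mult rename_vars_polyring)
  ultimately show ?thesis
    unfolding is_prime_ideal_def by blast
qed

lemma rename_vars_in_invariant_iff:
  assumes "rename_vars \<pi> ` I \<subseteq> I"
  shows "rename_vars \<pi> p \<in> I \<longleftrightarrow> p \<in> I"
  using assms rename_vars_involutive[of p] by (metis image_subset_iff)

lemma Ass_rename_vars_preimage:
  assumes invariant: "rename_vars \<pi> ` I \<subseteq> I" and "P \<in> Ass N I"
  shows "{x \<in> polyring N. rename_vars \<pi> x \<in> P} \<in> Ass N I"
proof -
  obtain r where prime: "is_prime_ideal N P" and r: "r \<in> polyring N"
    and P: "P = {a \<in> polyring N. a * r \<in> I}"
    using assms(2) unfolding Ass_def by blast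
  have "rename_vars \<pi> x * r \<in> I \<longleftrightarrow> x * rename_vars \<pi> r \<in> I" for x
    using rename_vars_in_invariant_iff[OF invariant, of "x * rename_vars \<pi> r"]
    by (simp add: rename_vars_mult)
  then have "{x \<in> polyring N. rename_vars \<pi> x \<in> P} = {x \<in> polyring N. x * rename_vars \<pi> r \<in> I}"
    unfolding P using rename_vars_polyring by auto
  then show ?thesis
    unfolding Ass_def using is_prime_ideal_rename_vars_preimage[OF prime] rename_vars_polyring[OF r] by blast
qed

lemma symbolic_power_rename_vars:
  assumes invariant: "rename_vars \<pi> ` I \<subseteq> I" and f: "f \<in> symbolic_power N I m"
  shows "rename_vars \<pi> f \<in> symbolic_power N I m"
proof -
  have "f \<in> polyring N"
    and witness: "\<And>Q. Q \<in> Ass N I \<Longrightarrow> \<exists>s\<in>polyring N - Q. s * f \<in> ideal_power N I m"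
    using f unfolding symbolic_power_def by blast+
  have "\<exists>s\<in>polyring N - P. s * rename_vars \<pi> f \<in> ideal_power N I m" if "P \<in> Ass N I" for P
  proof -
    have "{x \<in> polyring N. rename_vars \<pi> x \<in> P} \<in> Ass N I"
      using invariant that by (rule Ass_rename_vars_preimage)
    then obtain s where s: "s \<in> polyring N" "rename_vars \<pi> s \<notin> P" "s * f \<in> ideal_power N I m"
      using witness by blast
    have "rename_vars \<pi> s * rename_vars \<pi> f \<in> ideal_power N I m"
      using rename_vars_ideal_power[OF invariant s(3)] by (simp add: rename_vars_mult)
    with s show ?thesis
      by (intro bexI[of _ "rename_vars \<pi> s"]) (simp_all add: rename_vars_polyring)
  qed
  with \<open>f \<in> polyring N\<close> show ?thesis
    unfolding symbolic_power_def by (simp add: rename_vars_polyring)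
qed

end

section \<open>The bipyramid\<close>

lemma I_B_eq_SR_ideal: "I_B n = SR_ideal (n + 1) (B_face n)"
  unfolding I_B_def SR_ideal_def ..

lemma Ass_I_B_Var_notin:
  assumes "P \<in> Ass (n + 1) (I_B n :: 'k::comm_ring_1 mpoly set)"
  shows "\<exists>j \<in> {0, n + 1}. Var j \<notin> P"
proof -
  obtain \<sigma> where "B_face n \<sigma>"
    and completes: "\<And>i. i \<le> n + 1 \<Longrightarrow> Var i \<in> P \<Longrightarrow> \<exists>\<tau> \<subseteq> insert i \<sigma>. \<tau> \<subseteq> {0..n + 1} \<and> \<not> B_face n \<tau>"
    using assms unfolding I_B_eq_SR_ideal by (rule Ass_SR_ideal_face) blast
  then obtain F where F: "F \<in> B_facets n" "\<sigma> \<subseteq> F"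
    unfolding B_face_def by blast
  then obtain j e where j: "j \<in> {0, n + 1}" and "F = insert j e"
    unfolding B_facets_def by blast
  with F(2) have "insert j \<sigma> \<subseteq> F"
    by blast
  then have "B_face n \<tau>" if "\<tau> \<subseteq> insert j \<sigma>" for \<tau>
    unfolding B_face_def using F(1) that by (meson order_trans)
  then have "Var j \<notin> P"
    using completes[of j] j by auto
  with j show ?thesis ..
qed

lemma Q_edges_subset: "1 \<le> n \<Longrightarrow> e \<in> Q_edges n \<Longrightarrow> e \<subseteq> {1..n}"
  unfolding Q_edges_def by auto

lemma var_involution_swap: "var_involution N (id(0 := N, N := 0))"
  by unfold_locales auto

lemma B_face_swap:
  assumes "1 \<le> n" "B_face n \<sigma>"
  shows "B_face n (id(0 := n + 1, n + 1 := 0) ` \<sigma>)"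
proof -
  let ?swap = "id(0 := n + 1, n + 1 := 0)"
  obtain F where F: "F \<in> B_facets n" "\<sigma> \<subseteq> F"
    using assms(2) unfolding B_face_def by blast
  then obtain j e where j: "j \<in> {0, n + 1}" and e: "e \<in> Q_edges n" and "F = insert j e"
    unfolding B_facets_def by blast
  have "?swap ` e = id ` e"
    using Q_edges_subset[OF assms(1) e] by (intro image_cong) auto
  with F(2) \<open>F = insert j e\<close> have "?swap ` \<sigma> \<subseteq> insert (?swap j) e"
    by auto
  moreover have "insert (?swap j) e \<in> B_facets n"
    using j e unfolding B_facets_def by auto
  ultimately show ?thesis
    unfolding B_face_def by blast
qed

lemma symbolic_power_I_B_swap:
  assumes "1 \<le> n" "monom (n + 1) a \<in> symbolic_power (n + 1) (I_B n :: 'k::comm_ring_1 mpoly set) m"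
  shows "monom (n + 1) (a \<circ> id(0 := n + 1, n + 1 := 0)) \<in> symbolic_power (n + 1) (I_B n :: 'k mpoly set) m"
proof -
  interpret var_involution "n + 1" "id(0 := n + 1, n + 1 := 0)"
    by (rule var_involution_swap)
  have "rename_vars (id(0 := n + 1, n + 1 := 0)) p \<in> I_B n" if "p \<in> (I_B n :: 'k mpoly set)" for p
    using that unfolding I_B_eq_SR_ideal
    by (rule rename_vars_SR_ideal[rotated]) (rule B_face_swap[OF assms(1)])
  then have "rename_vars (id(0 := n + 1, n + 1 := 0)) ` (I_B n :: 'k mpoly set) \<subseteq> I_B n"
    by blast
  from symbolic_power_rename_vars[OF this assms(2)] show ?thesis
    unfolding rename_vars_monom .
qed

lemma min_ends_as_fun_upd:
  fixes a :: "nat \<Rightarrow> 'a::linorder"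
  assumes "j \<in> {0, N}"
  obtains c where "c \<in> {a, a \<circ> id(0 := N, N := 0)}" "min (a 0) (a N) \<le> c j"
    "c(j := min (a 0) (a N)) = a(0 := min (a 0) (a N), N := min (a 0) (a N))"
proof (cases "a ((id(0 := N, N := 0)) j) \<le> a j")
  case True
  then have "a(j := min (a 0) (a N)) = a(0 := min (a 0) (a N), N := min (a 0) (a N))"
    using assms by (cases "N = 0") (auto simp: fun_eq_iff min_def)
  with that[of a] assms show thesis
    by auto
next
  case False
  then have "(a \<circ> id(0 := N, N := 0))(j := min (a 0) (a N)) = a(0 := min (a 0) (a N), N := min (a 0) (a N))"
    using assms by (auto simp: fun_eq_iff)
  with that[of "a \<circ> id(0 := N, N := 0)"] assms show thesis
    by auto
qed

theorem lemma3p8: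
  fixes n m :: nat and a :: "nat \<Rightarrow> nat"
  assumes "n \<ge> 3" and "m \<ge> 1"
    and "(monom (n + 1) a :: 'k::field mpoly) \<in> symbolic_power (n + 1) (I_B n) m"
  shows "(monom (n + 1) (a(0 := min (a 0) (a (n + 1)), n + 1 := min (a 0) (a (n + 1)))) :: 'k mpoly)
           \<in> symbolic_power (n + 1) (I_B n) m"
proof -
  let ?N = "n + 1"
  define t where "t = min (a 0) (a ?N)"
  have swapped: "(monom ?N (a \<circ> id(0 := ?N, ?N := 0)) :: 'k mpoly) \<in> symbolic_power ?N (I_B n) m"
    using symbolic_power_I_B_swap[of n a m] assms(1,3) by simp
  have "\<exists>s \<in> polyring ?N - P. s * (monom ?N (a(0 := t, ?N := t)) :: 'k mpoly) \<in> ideal_power ?N (I_B n) m"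
    if P: "P \<in> Ass ?N (I_B n)" for P
  proof -
    obtain j where j: "j \<in> {0, ?N}" "Var j \<notin> P"
      using Ass_I_B_Var_notin[OF P] by blast
    obtain c where c: "c \<in> {a, a \<circ> id(0 := ?N, ?N := 0)}" "t \<le> c j" "c(j := t) = a(0 := t, ?N := t)"
      using min_ends_as_fun_upd[OF j(1)] unfolding t_def by blast
    with assms(3) swapped have "(monom ?N c :: 'k mpoly) \<in> symbolic_power ?N (I_B n) m"
      by blast
    moreover have "j \<le> ?N"
      using j(1) by auto
    ultimately show ?thesis
      using symbolic_power_lower_exponent[where a = c, OF _ P _ j(2) c(2)] unfolding c(3) by blast
  qed
  then show ?thesis
    unfolding symbolic_power_def t_def using polyring_monom by blast
qed

end
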